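(* For fixed $d>3$ there is a constant $c>0$, independent of $n$ and $s$, such that for every $s\in(0,1]$ and every initial position $x(0)$ with $\sum_i d\,(x_i(0)-\mu)^2\le 1$ (where $\mu=\frac1n\sum_ix_i(0)$), the random averaging system satisfies $\mathbb{E}\,E_s\le c/s$.
   Context: Fix an integer $d>3$ and $n>d$. In a random averaging system, for each $t\ge0$ the graph $G_t$ is chosen independently and uniformly at random among all simple $(d-1)$-regular graphs on $[n]$, and then a self-loop is added at every vertex. Let $M_t$ be the resulting $0/1$ adjacency matrix (all row sums equal to $d$). Set $P_t=M_t/d$ and $x(t+1)=P_tx(t)$. At time $t$, each edge $\{i,j\}$ of $G_t$ with $i\ne j$ is embedded as the closed interval with endpoints $x_i(t),x_j(t)$. The union of these intervals is a disjoint union of closed intervals (blocks) with lengths $l_1(t),\dots,l_{k_t}(t)$. The $s$-energy is $E_s=\sum_{t\ge0}\sum_il_i(t)^s$; it is a random variable. *)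

theory Defs
  imports "HOL-Analysis.Analysis" "HOL-Probability.Probability"
begin

definition simple_edges :: "nat \<Rightarrow> nat set set" where
  "simple_edges n = {e. \<exists>i j. i < n \<and> j < n \<and> i \<noteq> j \<and> e = {i, j}}"

definition regular_graphs :: "nat \<Rightarrow> nat \<Rightarrow> nat set set set" where
  "regular_graphs n k = {G. G \<subseteq> simple_edges n \<and> (\<forall>i<n. card {e\<in>G. i \<in> e} = k)}"

text \<open>One step x(t+1) = P_t x(t) with P_t = M_t/d, M_t = adjacency matrix of G_t plus
  a self-loop at each vertex.\<close>
definition avg_step :: "nat \<Rightarrow> nat \<Rightarrow> nat set set \<Rightarrow> (nat \<Rightarrow> real) \<Rightarrow> (nat \<Rightarrow> real)" where
  "avg_step d n G y = (\<lambda>i. (y i + (\<Sum>j\<in>{j. j < n \<and> {i, j} \<in> G}. y j)) / real d)"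

fun traj :: "nat \<Rightarrow> nat \<Rightarrow> (nat \<Rightarrow> real) \<Rightarrow> nat set set stream \<Rightarrow> nat \<Rightarrow> (nat \<Rightarrow> real)" where
  "traj d n x0 \<omega> 0 = x0"
| "traj d n x0 \<omega> (Suc t) = avg_step d n (\<omega> !! t) (traj d n x0 \<omega> t)"

definition edge_union :: "nat set set \<Rightarrow> (nat \<Rightarrow> real) \<Rightarrow> real set" where
  "edge_union G y = \<Union> {{min (y i) (y j) .. max (y i) (y j)} | i j. {i, j} \<in> G \<and> i \<noteq> j}"

definition block_sum :: "real \<Rightarrow> nat set set \<Rightarrow> (nat \<Rightarrow> real) \<Rightarrow> real" where
  "block_sum s G y = (\<Sum>C\<in>components (edge_union G y). (Sup C - Inf C) powr s)"

definition s_energy :: "nat \<Rightarrow> nat \<Rightarrow> real \<Rightarrow> (nat \<Rightarrow> real) \<Rightarrow> nat set set stream \<Rightarrow> ennreal" where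
  "s_energy d n s x0 \<omega> = (\<Sum>t. ennreal (block_sum s (\<omega> !! t) (traj d n x0 \<omega> t)))"

definition graph_seq_measure :: "nat \<Rightarrow> nat \<Rightarrow> nat set set stream measure" where
  "graph_seq_measure d n = stream_space (measure_pmf (pmf_of_set (regular_graphs n (d - 1))))"

end

theory Submission
  imports Defs
begin

text \<open>
  Averaging over a uniformly random (d-1)-regular graph contracts the dispersion
  \<Sum>(x_i - mu)^2 in expectation by the factor rho = 1 - 2(d-1)/d^2: one step loses the
  Dirichlet energy of the graph divided by d^2, and by symmetry every pair of vertices is an
  edge equally often. Every block has length at most twice the square root of the dispersion,
  and a block is determined by the sublevel set of the positions at its right end, a set that
  no edge crosses. A switching argument shows that a fixed proper vertex set is crossed by no
  edge in at most a 1/(n-1) fraction of the graphs, so the expected number of blocks is at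
  most 2. By concavity of u \<mapsto> u^(s/2), the expected contribution of step t is therefore at
  most 4 rho^(ts/2) times the initial dispersion to the power s/2, and the geometric series
  sums to at most 4 / (1 - rho^(s/2)) \<le> 4d^2 / ((d-1) s).
\<close>

section \<open>Regular graphs\<close>

definition neighbours :: "nat set set \<Rightarrow> nat \<Rightarrow> nat \<Rightarrow> nat set" where
  "neighbours G n i = {j. j < n \<and> {i, j} \<in> G}"

lemma regular_graphs_edgeE:
  assumes "G \<in> regular_graphs n k" "e \<in> G"
  obtains i j where "i < n" "j < n" "i \<noteq> j" "e = {i, j}"
  using assms unfolding regular_graphs_def simple_edges_def by auto

lemma regular_graphs_edgeD:
  assumes "G \<in> regular_graphs n k" "{a, b} \<in> G"
  shows "a < n" "b < n" "a \<noteq> b"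
  using assms unfolding regular_graphs_def simple_edges_def by (auto simp: doubleton_eq_iff)

lemma regular_graphs_degree:
  "G \<in> regular_graphs n k \<Longrightarrow> i < n \<Longrightarrow> card {e\<in>G. i \<in> e} = k"
  unfolding regular_graphs_def by auto

lemma finite_simple_edges: "finite (simple_edges n)"
  by (rule finite_subset[of _ "Pow {..<n}"]) (auto simp: simple_edges_def)

lemma finite_regular_graphs: "finite (regular_graphs n k)"
  by (rule finite_subset[of _ "Pow (simple_edges n)"]) (auto simp: regular_graphs_def finite_simple_edges)

lemma finite_regular_graph: "G \<in> regular_graphs n k \<Longrightarrow> finite G"
  unfolding regular_graphs_def using finite_simple_edges finite_subset by blast

lemma neighbours_subset: "neighbours G n i \<subseteq> {..<n}"
  unfolding neighbours_def by auto

lemma finite_neighbours [simp]: "finite (neighbours G n i)"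
  using finite_subset[OF neighbours_subset] by blast

lemma card_neighbours:
  assumes G: "G \<in> regular_graphs n k" and i: "i < n"
  shows "card (neighbours G n i) = k"
proof -
  have "bij_betw (\<lambda>j. {i, j}) (neighbours G n i) {e\<in>G. i \<in> e}"
  proof (rule bij_betwI')
    show "({i, j} = {i, j'}) = (j = j')" for j j'
      by (auto simp: doubleton_eq_iff)
    show "{i, j} \<in> {e\<in>G. i \<in> e}" if "j \<in> neighbours G n i" for j
      using that by (auto simp: neighbours_def)
    show "\<exists>j\<in>neighbours G n i. e = {i, j}" if e: "e \<in> {e\<in>G. i \<in> e}" for e
    proof -
      obtain a b where "a < n" "b < n" "e = {a, b}"
        using e regular_graphs_edgeE[OF G] by blast
      then show ?thesis
        using e by (auto simp: neighbours_def insert_commute)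
    qed
  qed
  then show ?thesis
    using regular_graphs_degree[OF assms] by (simp add: bij_betw_same_card)
qed

lemma avg_step_eq: "avg_step d n G y i = (y i + (\<Sum>j\<in>neighbours G n i. y j)) / real d"
  unfolding avg_step_def neighbours_def by simp

lemma sum_neighbours_eq_sum_if:
  "(\<Sum>j\<in>neighbours G n i. f j) = (\<Sum>j<n. if {i, j} \<in> G then f j else 0)"
  unfolding neighbours_def by (simp add: sum.If_cases Int_def conj_commute lessThan_def)

lemma sum_sum_neighbours:
  assumes "G \<in> regular_graphs n k"
  shows "(\<Sum>i<n. \<Sum>j\<in>neighbours G n i. f j) = real k * (\<Sum>j<n. f j)"
proof -
  have "(\<Sum>i<n. \<Sum>j\<in>neighbours G n i. f j) = (\<Sum>i<n. \<Sum>j<n. if {i, j} \<in> G then f j else 0)"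
    by (simp add: sum_neighbours_eq_sum_if)
  also have "\<dots> = (\<Sum>j<n. \<Sum>i<n. if {i, j} \<in> G then f j else 0)"
    by (rule sum.swap)
  also have "\<dots> = (\<Sum>j<n. \<Sum>i\<in>neighbours G n j. f j)"
    unfolding sum_neighbours_eq_sum_if by (simp add: insert_commute)
  also have "\<dots> = (\<Sum>j<n. real k * f j)"
    using card_neighbours[OF assms] by simp
  finally show ?thesis by (simp add: sum_distrib_left)
qed

lemma sum_avg_step:
  assumes "G \<in> regular_graphs n (d - 1)" "d > 0"
  shows "(\<Sum>i<n. avg_step d n G y i) = (\<Sum>i<n. y i)"
proof -
  have "(\<Sum>i<n. avg_step d n G y i) = ((\<Sum>i<n. y i) + (\<Sum>i<n. \<Sum>j\<in>neighbours G n i. y j)) / real d"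
    by (simp add: avg_step_eq sum_divide_distrib[symmetric] sum.distrib)
  also have "\<dots> = ((\<Sum>i<n. y i) + real (d - 1) * (\<Sum>i<n. y i)) / real d"
    using sum_sum_neighbours[OF assms(1)] by simp
  also have "\<dots> = (\<Sum>i<n. y i)"
    using assms(2) by (simp add: of_nat_diff field_simps)
  finally show ?thesis .
qed

section \<open>Contraction of the dispersion\<close>

lemma sum_sum_square_diff:
  fixes z :: "'a \<Rightarrow> real"
  assumes "finite N"
  shows "(\<Sum>j\<in>N. \<Sum>k\<in>N. (z j - z k)^2) = 2 * (real (card N) * (\<Sum>j\<in>N. (z j)^2) - (\<Sum>j\<in>N. z j)^2)"
  using assms
  by (simp add: power2_diff sum.distrib sum_subtractf sum_distrib_left sum_distrib_right
      power2_eq_square algebra_simps)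

lemma square_sum_le_card_mult_sum_squares:
  fixes z :: "'a \<Rightarrow> real"
  shows "(\<Sum>j\<in>N. z j)^2 \<le> real (card N) * (\<Sum>j\<in>N. (z j)^2)"
proof (cases "finite N")
  case True
  have "0 \<le> (\<Sum>j\<in>N. \<Sum>k\<in>N. (z j - z k)^2)"
    by (intro sum_nonneg) auto
  then show ?thesis
    unfolding sum_sum_square_diff[OF True] by simp
qed simp

lemma square_mean_le:
  fixes z :: "'a \<Rightarrow> real" and N :: "'a set"
  defines "m \<equiv> real (card N) + 1"
  shows "((a + (\<Sum>j\<in>N. z j)) / m)^2
           \<le> (a^2 + (\<Sum>j\<in>N. (z j)^2)) / m - (\<Sum>j\<in>N. (a - z j)^2) / m^2"
proof -
  define A where "A = (\<Sum>j\<in>N. z j)"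
  define B where "B = (\<Sum>j\<in>N. (z j)^2)"
  have m: "m > 0" "real (card N) = m - 1"
    unfolding m_def by simp_all
  have spread: "(\<Sum>j\<in>N. (a - z j)^2) = (m - 1) * a^2 - 2 * a * A + B"
    using m(2) by (simp add: power2_diff sum.distrib sum_subtractf sum_distrib_left[symmetric]
        A_def B_def mult.assoc)
  have "(a + A)^2 \<le> m * (a^2 + B) - ((m - 1) * a^2 - 2 * a * A + B)"
    using square_sum_le_card_mult_sum_squares[of z N] m(2)
    by (simp add: A_def B_def power2_eq_square algebra_simps)
  then have "((a + A) / m)^2 \<le> (m * (a^2 + B) - ((m - 1) * a^2 - 2 * a * A + B)) / m^2"
    using m(1) by (simp add: power_divide divide_right_mono)
  also have "\<dots> = (a^2 + B) / m - ((m - 1) * a^2 - 2 * a * A + B) / m^2"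
    using m(1) by (simp add: field_simps power2_eq_square)
  finally show ?thesis
    unfolding spread A_def B_def .
qed

lemma sum_square_dev_avg_step_le:
  assumes G: "G \<in> regular_graphs n (d - 1)" and d: "d > 0"
  shows "(\<Sum>i<n. (avg_step d n G y i - c)^2)
           \<le> (\<Sum>i<n. (y i - c)^2) - (\<Sum>i<n. \<Sum>j\<in>neighbours G n i. (y i - y j)^2) / (real d)^2"
proof -
  have card: "real (card (neighbours G n i)) = real d - 1" if "i < n" for i
    using card_neighbours[OF G that] d by (simp add: of_nat_diff)
  have dev: "avg_step d n G y i - c = ((y i - c) + (\<Sum>j\<in>neighbours G n i. y j - c)) / real d"
    if "i < n" for i
    using d by (simp add: avg_step_eq sum_subtractf card[OF that] field_simps)
  have "(\<Sum>i<n. (avg_step d n G y i - c)^2)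
      \<le> (\<Sum>i<n. ((y i - c)^2 + (\<Sum>j\<in>neighbours G n i. (y j - c)^2)) / real d
                 - (\<Sum>j\<in>neighbours G n i. ((y i - c) - (y j - c))^2) / (real d)^2)"
  proof (rule sum_mono)
    fix i assume "i \<in> {..<n}"
    then have i: "i < n" by simp
    from square_mean_le[where z = "\<lambda>j. y j - c" and N = "neighbours G n i" and a = "y i - c"]
    show "(avg_step d n G y i - c)^2
      \<le> ((y i - c)^2 + (\<Sum>j\<in>neighbours G n i. (y j - c)^2)) / real d
         - (\<Sum>j\<in>neighbours G n i. ((y i - c) - (y j - c))^2) / (real d)^2"
      by (simp add: dev[OF i] card[OF i])
  qed
  also have "\<dots> = ((\<Sum>i<n. (y i - c)^2) + (\<Sum>i<n. \<Sum>j\<in>neighbours G n i. (y j - c)^2)) / real d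
                   - (\<Sum>i<n. \<Sum>j\<in>neighbours G n i. (y i - y j)^2) / (real d)^2"
    by (simp add: sum_subtractf sum_divide_distrib[symmetric] sum.distrib)
  also have "\<dots> = (\<Sum>i<n. (y i - c)^2) - (\<Sum>i<n. \<Sum>j\<in>neighbours G n i. (y i - y j)^2) / (real d)^2"
    using sum_sum_neighbours[OF G, of "\<lambda>j. (y j - c)^2"] d by (simp add: field_simps of_nat_diff)
  finally show ?thesis .
qed

section \<open>Symmetry of the uniform regular graph\<close>

lemma image_regular_graph_permutes:
  assumes p: "p permutes {..<n}" and G: "G \<in> regular_graphs n k"
  shows "image p ` G \<in> regular_graphs n k"
  unfolding regular_graphs_def
proof safe
  fix e assume "e \<in> G"
  then obtain i j where "i < n" "j < n" "i \<noteq> j" "e = {i, j}"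
    using regular_graphs_edgeE[OF G] by blast
  then show "p ` e \<in> simple_edges n"
    using permutes_inj[OF p] permutes_in_image[OF p]
    unfolding simple_edges_def by (auto dest: injD)
next
  fix i assume i: "i < n"
  have "{e'\<in>image p ` G. i \<in> e'} = image p ` {e\<in>G. inv p i \<in> e}"
    using permutes_inverses[OF p] by (auto simp: image_iff) metis
  moreover have "inj_on (image p) {e\<in>G. inv p i \<in> e}"
    using permutes_inj[OF p] by (auto intro: inj_onI simp: inj_image_eq_iff)
  moreover have "inv p i < n"
    using permutes_in_image[OF permutes_inv[OF p]] i by simp
  ultimately show "card {e'\<in>image p ` G. i \<in> e'} = k"
    by (simp add: card_image regular_graphs_degree[OF G])
qed

lemma card_regular_graphs_with_edge_permutes:
  assumes p: "p permutes {..<n}"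
  shows "card {G\<in>regular_graphs n k. p ` e \<in> G} = card {G\<in>regular_graphs n k. e \<in> G}"
proof -
  have inv: "image p ` image (inv p) ` G = G" "inv p ` p ` e = e" for G e
    using permutes_inverses[OF p] by (simp_all add: image_comp comp_def)
  have "{G\<in>regular_graphs n k. p ` e \<in> G} = image (image p) ` {G\<in>regular_graphs n k. e \<in> G}"
  proof safe
    fix G assume G: "G \<in> regular_graphs n k" "p ` e \<in> G"
    show "G \<in> image (image p) ` {G\<in>regular_graphs n k. e \<in> G}"
    proof (intro image_eqI[of G _ "image (inv p) ` G"] CollectI conjI)
      show "e \<in> image (inv p) ` G"
        using G(2) inv(2)[of e] by blast
    qed (simp_all add: inv G image_regular_graph_permutes[OF permutes_inv[OF p]])
  next
    fix G assume "G \<in> regular_graphs n k" "e \<in> G"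
    then show "image p ` G \<in> regular_graphs n k" "p ` e \<in> image p ` G"
      by (simp_all add: image_regular_graph_permutes[OF p])
  qed
  moreover have "inj (image (image p))"
    using permutes_inj[OF p] by (meson inj_onI inj_image_eq_iff)
  ultimately show ?thesis
    by (simp add: card_image inj_on_subset)
qed

text \<open>By symmetry every edge lies in the same number of regular graphs; the edge {0, 1}
  is a representative.\<close>
definition edge_multiplicity :: "nat \<Rightarrow> nat \<Rightarrow> nat" where
  "edge_multiplicity n k = card {G\<in>regular_graphs n k. {0, 1} \<in> G}"

lemma card_regular_graphs_with_edge:
  assumes "i < n" "j < n" "i \<noteq> j"
  shows "card {G\<in>regular_graphs n k. {i, j} \<in> G} = edge_multiplicity n k"
proof -
  define t where "t = Transposition.transpose 0 i 1"
  define p where "p = Transposition.transpose t j \<circ> Transposition.transpose 0 i"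
  have "1 < n" using assms by linarith
  then have "t < n"
    using assms permutes_in_image[OF permutes_swap_id[of 0 "{..<n}" i]] by (simp add: t_def)
  then have p: "p permutes {..<n}"
    unfolding p_def using assms by (intro permutes_compose permutes_swap_id) auto
  have "t \<noteq> i"
    unfolding t_def by (metis transpose_apply_first transpose_eq_imp_eq zero_neq_one)
  then have "p ` {0, 1} = {i, j}"
    using assms(3) by (simp add: p_def t_def)
  then show ?thesis
    unfolding edge_multiplicity_def
    using card_regular_graphs_with_edge_permutes[OF p, of k "{0, 1}"] by simp
qed

lemma sum_regular_graphs_sum_neighbours:
  assumes "\<And>i. f i i = 0"
  shows "(\<Sum>G\<in>regular_graphs n k. \<Sum>i<n. \<Sum>j\<in>neighbours G n i. f i j)
           = real (edge_multiplicity n k) * (\<Sum>i<n. \<Sum>j<n. f i j)"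
proof -
  let ?R = "regular_graphs n k"
  have "(\<Sum>G\<in>?R. \<Sum>i<n. \<Sum>j\<in>neighbours G n i. f i j)
      = (\<Sum>G\<in>?R. \<Sum>i<n. \<Sum>j<n. if {i, j} \<in> G then f i j else 0)"
    by (simp add: sum_neighbours_eq_sum_if)
  also have "\<dots> = (\<Sum>i<n. \<Sum>j<n. \<Sum>G\<in>?R. if {i, j} \<in> G then f i j else 0)"
    by (subst sum.swap) (simp add: sum.swap[of _ ?R])
  also have "\<dots> = (\<Sum>i<n. \<Sum>j<n. f i j * real (edge_multiplicity n k))"
  proof (intro sum.cong refl)
    fix i j assume "i \<in> {..<n}" "j \<in> {..<n}"
    then have "f i j * real (card {G\<in>?R. {i, j} \<in> G}) = f i j * real (edge_multiplicity n k)"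
      using card_regular_graphs_with_edge[of i n j k] assms by (cases "i = j") auto
    then show "(\<Sum>G\<in>?R. if {i, j} \<in> G then f i j else 0) = f i j * real (edge_multiplicity n k)"
      by (simp add: sum.If_cases finite_regular_graphs Int_def conj_commute)
  qed
  finally show ?thesis
    by (simp add: sum_distrib_left sum_distrib_right mult.commute)
qed

lemma edge_multiplicity_mult:
  assumes "1 < n"
  shows "edge_multiplicity n k * (n - 1) = k * card (regular_graphs n k)"
proof -
  let ?R = "regular_graphs n k"
  have "k * card ?R = (\<Sum>G\<in>?R. card (neighbours G n 0))"
    using assms card_neighbours by simp
  also have "\<dots> = (\<Sum>G\<in>?R. \<Sum>j<n. if {0, j} \<in> G then 1 else 0)"
    using sum_neighbours_eq_sum_if[of "\<lambda>_. 1::nat"] by simp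
  also have "\<dots> = (\<Sum>j<n. \<Sum>G\<in>?R. if {0, j} \<in> G then 1 else 0)"
    by (rule sum.swap)
  also have "\<dots> = (\<Sum>j<n. card {G\<in>?R. {0, j} \<in> G})"
    by (simp add: sum.If_cases finite_regular_graphs Int_def conj_commute)
  also have "\<dots> = (\<Sum>j\<in>{..<n} - {0}. edge_multiplicity n k)"
  proof (rule sum.mono_neutral_cong_right)
    have no_loop: "{G\<in>?R. {0} \<in> G} = {}"
      using regular_graphs_edgeD(3)[of _ n k 0 0] by auto
    show "\<forall>j\<in>{..<n} - ({..<n} - {0}). card {G\<in>?R. {0, j} \<in> G} = 0"
      by (auto simp: no_loop)
  qed (auto simp: card_regular_graphs_with_edge)
  finally show ?thesis
    using assms by simp
qed

lemma sum_regular_graphs_sum_square_diff_neighbours_ge: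
  assumes n: "1 < n" and c: "c = (\<Sum>i<n. y i) / real n"
  shows "2 * real k * real (card (regular_graphs n k)) * (\<Sum>i<n. (y i - c)^2)
           \<le> (\<Sum>G\<in>regular_graphs n k. \<Sum>i<n. \<Sum>j\<in>neighbours G n i. (y i - y j)^2)"
proof -
  let ?q = "real (edge_multiplicity n k)"
  define W where "W = (\<Sum>i<n. (y i - c)^2)"
  have "(\<Sum>i<n. \<Sum>j<n. (y i - y j)^2) = 2 * real n * W"
  proof -
    have "(\<Sum>i<n. y i - c) = 0"
      using n c by (simp add: sum_subtractf)
    then show ?thesis
      using sum_sum_square_diff[of "{..<n}" "\<lambda>i. y i - c"] by (simp add: W_def)
  qed
  then have sum_eq: "(\<Sum>G\<in>regular_graphs n k. \<Sum>i<n. \<Sum>j\<in>neighbours G n i. (y i - y j)^2)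
      = ?q * (real n * (2 * W))"
    by (simp add: sum_regular_graphs_sum_neighbours)
  have "2 * real k * real (card (regular_graphs n k)) * W = ?q * real (n - 1) * (2 * W)"
    using arg_cong[OF edge_multiplicity_mult[OF n, of k], of real] by simp
  also have "\<dots> \<le> ?q * (real n * (2 * W))"
  proof -
    have "real (n - 1) * (2 * W) \<le> real n * (2 * W)"
      unfolding W_def by (intro mult_right_mono) (auto intro!: sum_nonneg)
    then show ?thesis
      by (simp add: mult.assoc mult_left_mono)
  qed
  finally show ?thesis
    unfolding sum_eq W_def .
qed

lemma sum_regular_graphs_sum_square_dev_avg_step_le:
  assumes d: "d > 1" and n: "n > 1" and c: "c = (\<Sum>i<n. y i) / real n"
  shows "(\<Sum>G\<in>regular_graphs n (d - 1). \<Sum>i<n. (avg_step d n G y i - c)^2)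
           \<le> (1 - 2 * (real d - 1) / (real d)^2) * real (card (regular_graphs n (d - 1)))
               * (\<Sum>i<n. (y i - c)^2)"
proof -
  let ?R = "regular_graphs n (d - 1)"
  define W where "W = (\<Sum>i<n. (y i - c)^2)"
  define D where "D G = (\<Sum>i<n. \<Sum>j\<in>neighbours G n i. (y i - y j)^2)" for G
  have "(\<Sum>G\<in>?R. \<Sum>i<n. (avg_step d n G y i - c)^2) \<le> (\<Sum>G\<in>?R. W - D G / (real d)^2)"
    unfolding W_def D_def by (rule sum_mono, rule sum_square_dev_avg_step_le) (use d in auto)
  also have "\<dots> = real (card ?R) * W - (\<Sum>G\<in>?R. D G) / (real d)^2"
    by (simp add: sum_subtractf sum_divide_distrib)
  also have "\<dots> \<le> real (card ?R) * W - 2 * (real d - 1) * real (card ?R) * W / (real d)^2"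
    using sum_regular_graphs_sum_square_diff_neighbours_ge[OF n c, of "d - 1"] d
    by (simp add: divide_right_mono W_def D_def of_nat_diff)
  also have "\<dots> = (1 - 2 * (real d - 1) / (real d)^2) * real (card ?R) * W"
    by (simp add: algebra_simps)
  finally show ?thesis
    unfolding W_def .
qed

section \<open>Switchings\<close>

definition no_edge_across :: "nat set set \<Rightarrow> nat set \<Rightarrow> bool" where
  "no_edge_across G S \<longleftrightarrow> (\<forall>e\<in>G. e \<subseteq> S \<or> e \<inter> S = {})"

definition switch :: "nat set set \<Rightarrow> nat \<Rightarrow> nat \<Rightarrow> nat \<Rightarrow> nat \<Rightarrow> nat set set" where
  "switch G a b c d = (G - {{a, b}, {c, d}}) \<union> {{a, c}, {b, d}}"

lemma card_edges_containing_two_disjoint: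
  assumes "a \<noteq> b" "c \<noteq> d" "a \<noteq> c" "a \<noteq> d" "b \<noteq> c" "b \<noteq> d"
  shows "card {e\<in>{{a, b}, {c, d}}. i \<in> e} = card {e\<in>{{a, c}, {b, d}}. i \<in> e}"
proof -
  have "{a, b} \<noteq> {c, d}" "{a, c} \<noteq> {b, d}"
    using assms by (auto simp: doubleton_eq_iff)
  moreover have "{e\<in>{A, B}. i \<in> e} = (if i \<in> A then {A} else {}) \<union> (if i \<in> B then {B} else {})"
    for A B by auto
  ultimately show ?thesis
    using assms by auto
qed

text \<open>Switching two edges that do not cross a cut S into two crossing edges is at most
  two-to-one onto the regular graphs; counting switchings both ways shows that graphs
  with no edge across S are rare.\<close>
locale vertex_cut =
  fixes n k :: nat and S :: "nat set"
  assumes S_subset: "S \<subseteq> {..<n}"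
begin

definition switchings :: "(nat set set \<times> (nat \<times> nat) \<times> (nat \<times> nat)) set" where
  "switchings = (SIGMA G:{G\<in>regular_graphs n k. no_edge_across G S}.
     {(a, b). a \<in> S \<and> {a, b} \<in> G} \<times> {(c, d). c \<in> {..<n} - S \<and> {c, d} \<in> G})"

lemma switchingsD:
  assumes "(G, (a, b), (c, d)) \<in> switchings"
  shows "G \<in> regular_graphs n k" "{a, b} \<in> G" "{c, d} \<in> G" "{a, c} \<notin> G" "{b, d} \<notin> G"
    and "a \<in> S" "b \<in> S" "c \<notin> S" "d \<notin> S" "a \<noteq> b" "c \<noteq> d" "c < n" "d < n"
proof -
  have G: "G \<in> regular_graphs n k" and no_across: "no_edge_across G S"
    and ab: "a \<in> S" "{a, b} \<in> G" and cd: "c < n" "c \<notin> S" "{c, d} \<in> G"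
    using assms unfolding switchings_def by auto
  then show "G \<in> regular_graphs n k" "{a, b} \<in> G" "{c, d} \<in> G" "a \<in> S" "c \<notin> S" "c < n"
    by simp_all
  have across: "e \<subseteq> S \<or> e \<inter> S = {}" if "e \<in> G" for e
    using no_across that unfolding no_edge_across_def by blast
  show b: "b \<in> S" and d: "d \<notin> S"
    using across[OF ab(2)] across[OF cd(3)] ab(1) cd(2) by auto
  show "{a, c} \<notin> G" "{b, d} \<notin> G"
    using across[of "{a, c}"] across[of "{b, d}"] ab(1) cd(2) b d by auto
  show "a \<noteq> b" "c \<noteq> d" "d < n"
    using regular_graphs_edgeD[OF G ab(2)] regular_graphs_edgeD[OF G cd(3)] by simp_all
qed

lemma switch_regular:
  assumes sw: "(G, (a, b), (c, d)) \<in> switchings"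
  shows "switch G a b c d \<in> regular_graphs n k"
  unfolding regular_graphs_def
proof safe
  note F = switchingsD[OF sw]
  have "a < n" "b < n"
    using S_subset F(6,7) by auto
  moreover have "a \<noteq> c" "b \<noteq> d"
    using F(6-9) by auto
  ultimately have "{a, c} \<in> simple_edges n" "{b, d} \<in> simple_edges n"
    using F(12,13) unfolding simple_edges_def by blast+
  moreover have "G \<subseteq> simple_edges n"
    using F(1) unfolding regular_graphs_def by blast
  moreover fix e assume "e \<in> switch G a b c d"
  ultimately show "e \<in> simple_edges n"
    unfolding switch_def by blast
next
  note F = switchingsD[OF sw]
  have distinct: "a \<noteq> c" "a \<noteq> d" "b \<noteq> c" "b \<noteq> d"
    using F(6-9) by auto
  fix i assume i: "i < n"
  let ?X = "{{a, b}, {c, d}}" and ?Y = "{{a, c}, {b, d}}"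
  let ?Gi = "{e\<in>G. i \<in> e}" and ?Xi = "{e\<in>?X. i \<in> e}" and ?Yi = "{e\<in>?Y. i \<in> e}"
  have fin: "finite ?Gi"
    using finite_regular_graph[OF F(1)] by simp
  have Xi: "?Xi \<subseteq> ?Gi"
    using F(2,3) by blast
  have "{e\<in>switch G a b c d. i \<in> e} = (?Gi - ?Xi) \<union> ?Yi"
    unfolding switch_def by blast
  moreover have "card ((?Gi - ?Xi) \<union> ?Yi) = card (?Gi - ?Xi) + card ?Yi"
    using fin F(4,5) by (intro card_Un_disjoint) auto
  ultimately have "card {e\<in>switch G a b c d. i \<in> e} = card (?Gi - ?Xi) + card ?Yi"
    by simp
  also have "\<dots> = card ?Gi"
    using card_Diff_subset[OF finite_subset[OF Xi fin] Xi] card_mono[OF fin Xi]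
      card_edges_containing_two_disjoint[OF F(10,11) distinct, of i] by simp
  finally show "card {e\<in>switch G a b c d. i \<in> e} = k"
    using regular_graphs_degree[OF F(1) i] by simp
qed

lemma switch_edges_across:
  assumes sw: "(G, (a, b), (c, d)) \<in> switchings"
  shows "{e\<in>switch G a b c d. \<not> (e \<subseteq> S \<or> e \<inter> S = {})} = {{a, c}, {b, d}}"
proof -
  note F = switchingsD[OF sw]
  have "no_edge_across G S"
    using sw unfolding switchings_def by simp
  then show ?thesis
    using F unfolding switch_def no_edge_across_def by auto
qed

lemma switch_inverse:
  assumes "(G, (a, b), (c, d)) \<in> switchings"
  shows "G = (switch G a b c d - {{a, c}, {b, d}}) \<union> {{a, b}, {c, d}}"
  using switchingsD[OF assms] unfolding switch_def by blast

lemma crossing_pairs_eq: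
  assumes S: "a \<in> S" "b \<in> S" "a' \<in> S" "b' \<in> S" and T: "c \<notin> S" "d \<notin> S" "c' \<notin> S" "d' \<notin> S"
    and "a \<noteq> b" and eq: "{{a, c}, {b, d}} = {{a', c'}, {b', d'}}" and "(a < b) = (a' < b')"
  shows "a = a' \<and> b = b' \<and> c = c' \<and> d = d'"
proof -
  have side: "x = u \<and> y = v" if "{x, y} = {u, v}" "x \<in> S" "u \<in> S" "y \<notin> S" "v \<notin> S"
    for x y u v
    using that by (auto simp: doubleton_eq_iff)
  from doubleton_eq_iff[THEN iffD1, OF eq]
  show ?thesis
  proof (elim disjE conjE)
    assume "{a, c} = {a', c'}" "{b, d} = {b', d'}"
    then show ?thesis
      using side[of a c a' c'] side[of b d b' d'] S T by blast
  next
    assume "{a, c} = {b', d'}" "{b, d} = {a', c'}"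
    then have "a = b'" "b = a'"
      using side[of a c b' d'] side[of b d a' c'] S T by blast+
    then show ?thesis
      using assms(9,11) by auto
  qed
qed

text \<open>The flag a < b separates the switchings (a, b, c, d) and (b, a, d, c), which produce the
  same graph.\<close>
lemma inj_on_switch: "inj_on (\<lambda>(G, (a, b), (c, d)). (switch G a b c d, a < b)) switchings"
proof (rule inj_onI)
  fix x x' assume x: "x \<in> switchings" and x': "x' \<in> switchings"
    and eq: "(\<lambda>(G, (a, b), (c, d)). (switch G a b c d, a < b)) x
      = (\<lambda>(G, (a, b), (c, d)). (switch G a b c d, a < b)) x'"
  obtain G a b c d where x_eq: "x = (G, (a, b), (c, d))"
    by (metis prod.collapse)
  obtain G' a' b' c' d' where x'_eq: "x' = (G', (a', b'), (c', d'))"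
    by (metis prod.collapse)
  note sw = x[unfolded x_eq] and sw' = x'[unfolded x'_eq]
  have H: "switch G a b c d = switch G' a' b' c' d'" and flag: "(a < b) = (a' < b')"
    using eq unfolding x_eq x'_eq by simp_all
  have "{{a, c}, {b, d}} = {{a', c'}, {b', d'}}"
    using switch_edges_across[OF sw] switch_edges_across[OF sw'] H by simp
  then have "a = a' \<and> b = b' \<and> c = c' \<and> d = d'"
    using switchingsD(6-10)[OF sw] switchingsD(6-9)[OF sw'] flag by (intro crossing_pairs_eq)
  moreover from this have "G = G'"
    using switch_inverse[OF sw] switch_inverse[OF sw'] H by simp
  ultimately show "x = x'"
    unfolding x_eq x'_eq by simp
qed

lemma oriented_edges_from_eq:
  assumes "G \<in> regular_graphs n k"
  shows "{(a, b). a \<in> A \<and> {a, b} \<in> G} = (SIGMA a:A. neighbours G n a)"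
  unfolding neighbours_def using regular_graphs_edgeD[OF assms] by auto

lemma card_oriented_edges_from:
  assumes G: "G \<in> regular_graphs n k" and A: "A \<subseteq> {..<n}"
  shows "card {(a, b). a \<in> A \<and> {a, b} \<in> G} = card A * k"
proof -
  have "finite A"
    using A finite_subset by blast
  then have "card {(a, b). a \<in> A \<and> {a, b} \<in> G} = (\<Sum>a\<in>A. card (neighbours G n a))"
    by (simp add: oriented_edges_from_eq[OF G] card_SigmaI)
  also have "\<dots> = (\<Sum>a\<in>A. k)"
    using card_neighbours[OF G] A by (intro sum.cong) auto
  finally show ?thesis
    by simp
qed

lemma card_switchings:
  "card switchings
     = card {G\<in>regular_graphs n k. no_edge_across G S} * (card S * k) * (card ({..<n} - S) * k)"
proof -
  let ?C = "{G\<in>regular_graphs n k. no_edge_across G S}"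
  have fin: "finite {(a, b). a \<in> A \<and> {a, b} \<in> G}" if "G \<in> regular_graphs n k" "A \<subseteq> {..<n}" for G A
    using that finite_subset[of A] by (auto simp: oriented_edges_from_eq)
  have "card switchings = (\<Sum>G\<in>?C.
          card ({(a, b). a \<in> S \<and> {a, b} \<in> G} \<times> {(c, d). c \<in> {..<n} - S \<and> {c, d} \<in> G}))"
    unfolding switchings_def
  proof (rule card_SigmaI)
    show "\<forall>G\<in>?C. finite ({(a, b). a \<in> S \<and> {a, b} \<in> G} \<times> {(c, d). c \<in> {..<n} - S \<and> {c, d} \<in> G})"
      using S_subset by (blast intro: finite_cartesian_product fin)
  qed (simp add: finite_regular_graphs)
  also have "\<dots> = (\<Sum>G\<in>?C. (card S * k) * (card ({..<n} - S) * k))"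
  proof (rule sum.cong[OF refl])
    fix G assume "G \<in> ?C"
    then have G: "G \<in> regular_graphs n k"
      by simp
    show "card ({(a, b). a \<in> S \<and> {a, b} \<in> G} \<times> {(c, d). c \<in> {..<n} - S \<and> {c, d} \<in> G})
        = (card S * k) * (card ({..<n} - S) * k)"
      unfolding card_cartesian_product card_oriented_edges_from[OF G S_subset]
        card_oriented_edges_from[OF G Diff_subset] ..
  qed
  finally show ?thesis
    by simp
qed

lemma card_no_edge_across_mult_le:
  "card {G\<in>regular_graphs n k. no_edge_across G S} * (card S * k) * (card ({..<n} - S) * k)
     \<le> 2 * card (regular_graphs n k)"
proof -
  have "(\<lambda>(G, (a, b), (c, d)). (switch G a b c d, a < b)) ` switchings
          \<subseteq> regular_graphs n k \<times> (UNIV :: bool set)"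
    using switch_regular by auto
  then have "card switchings \<le> card (regular_graphs n k \<times> (UNIV :: bool set))"
    by (intro card_inj_on_le[OF inj_on_switch]) (auto simp: finite_regular_graphs)
  then show ?thesis
    by (simp add: card_switchings card_cartesian_product mult.commute)
qed

end

lemma card_no_edge_across_le:
  assumes S: "S \<subseteq> {..<n}" "S \<noteq> {}" "S \<noteq> {..<n}" and k: "2 \<le> k"
  shows "card {G\<in>regular_graphs n k. no_edge_across G S} * (n - 1) \<le> card (regular_graphs n k)"
proof -
  interpret vertex_cut n k S
    by unfold_locales (rule S(1))
  let ?C = "card {G\<in>regular_graphs n k. no_edge_across G S}" and ?s = "card S"
  have "finite S"
    using S(1) finite_subset by blast
  then have s: "1 \<le> ?s" "?s < n"
    using S psubset_card_mono[of "{..<n}" S] by (auto simp: Suc_le_eq card_gt_0_iff)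
  then have "n - 1 \<le> ?s * (n - ?s)"
    by (cases ?s; cases "n - ?s") (auto simp: algebra_simps)
  then have "?C * (n - 1) * 2 \<le> ?C * (?s * (n - ?s)) * (k * k)"
    using k mult_le_mono[of 1 k 2 k] by (intro mult_mono) auto
  also have "\<dots> = ?C * (?s * k) * (card ({..<n} - S) * k)"
    using card_Diff_subset[OF \<open>finite S\<close> S(1)] by (simp add: algebra_simps)
  also have "\<dots> \<le> 2 * card (regular_graphs n k)"
    by (rule card_no_edge_across_mult_le)
  finally show ?thesis
    by simp
qed

section \<open>Blocks and sublevel sets\<close>

definition sublevel :: "nat \<Rightarrow> (nat \<Rightarrow> real) \<Rightarrow> real \<Rightarrow> nat set" where
  "sublevel n y a = {i. i < n \<and> y i \<le> a}"

definition proper_sublevels :: "nat \<Rightarrow> (nat \<Rightarrow> real) \<Rightarrow> nat set set" where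
  "proper_sublevels n y = {S. \<exists>a. S = sublevel n y a \<and> S \<noteq> {} \<and> S \<noteq> {..<n}}"

lemma proper_sublevels_subset: "S \<in> proper_sublevels n y \<Longrightarrow> S \<subseteq> {..<n}"
  unfolding proper_sublevels_def sublevel_def by auto

lemma finite_proper_sublevels: "finite (proper_sublevels n y)"
  by (rule finite_subset[of _ "Pow {..<n}"]) (auto dest: proper_sublevels_subset)

text \<open>Sublevel sets form a chain, so they are determined by their sizes, which lie in 1..n-1.\<close>
lemma card_proper_sublevels: "card (proper_sublevels n y) \<le> n - 1"
proof -
  have "inj_on card (proper_sublevels n y)"
  proof (rule inj_onI)
    fix S S' assume S: "S \<in> proper_sublevels n y" and S': "S' \<in> proper_sublevels n y"
      and "card S = card S'"
    moreover have "finite S" "finite S'"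
      using S S' by (auto dest!: proper_sublevels_subset intro: finite_subset)
    moreover have "S \<subseteq> S' \<or> S' \<subseteq> S"
      using S S' unfolding proper_sublevels_def sublevel_def by (auto simp: linorder_linear)
    ultimately show "S = S'"
      by (metis card_subset_eq)
  qed
  moreover have "card ` proper_sublevels n y \<subseteq> {1..n - 1}"
  proof
    fix m assume "m \<in> card ` proper_sublevels n y"
    then obtain S where S: "S \<in> proper_sublevels n y" "m = card S"
      by blast
    then have "S \<subset> {..<n}" "S \<noteq> {}"
      using proper_sublevels_subset[OF S(1)] unfolding proper_sublevels_def by auto
    then show "m \<in> {1..n - 1}"
      using S(2) psubset_card_mono[of "{..<n}" S] finite_subset[of S "{..<n}"]
      by (auto simp: Suc_le_eq card_gt_0_iff)
  qed
  ultimately show ?thesis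
    using card_inj_on_le[of card "proper_sublevels n y" "{1..n - 1}"] by simp
qed

definition edge_interval :: "(nat \<Rightarrow> real) \<Rightarrow> nat \<Rightarrow> nat \<Rightarrow> real set" where
  "edge_interval y i j = {min (y i) (y j) .. max (y i) (y j)}"

lemma edge_union_iff:
  "x \<in> edge_union G y \<longleftrightarrow> (\<exists>i j. {i, j} \<in> G \<and> i \<noteq> j \<and> x \<in> edge_interval y i j)"
  unfolding edge_union_def edge_interval_def by blast

lemma endpoints_in_edge_interval: "y i \<in> edge_interval y i j" "y j \<in> edge_interval y i j"
  unfolding edge_interval_def by auto

context
  fixes G :: "nat set set" and n k :: nat and y :: "nat \<Rightarrow> real"
  assumes G: "G \<in> regular_graphs n k"
begin

lemma closed_edge_union: "closed (edge_union G y)"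
proof -
  let ?P = "{(i, j). {i, j} \<in> G \<and> i \<noteq> j}"
  have "finite ?P"
    by (rule finite_subset[of _ "{..<n} \<times> {..<n}"]) (auto dest: regular_graphs_edgeD[OF G])
  moreover have "edge_union G y = (\<Union>(i, j)\<in>?P. edge_interval y i j)"
    by (rule set_eqI) (auto simp: edge_union_iff)
  ultimately show ?thesis
    by (auto simp: edge_interval_def intro!: closed_UN)
qed

lemma edge_union_dist_le:
  assumes "x \<in> edge_union G y"
  shows "\<bar>x - c\<bar> \<le> sqrt (\<Sum>i<n. (y i - c)^2)"
proof -
  have vertex: "\<bar>y i - c\<bar> \<le> sqrt (\<Sum>i<n. (y i - c)^2)" if "i < n" for i
    using real_sqrt_le_mono[OF member_le_sum[of i "{..<n}" "\<lambda>i. (y i - c)^2"]] that by simp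
  obtain i j where ij: "{i, j} \<in> G" "x \<in> edge_interval y i j"
    using assms by (auto simp: edge_union_iff)
  then have "i < n" "j < n"
    using regular_graphs_edgeD[OF G ij(1)] by simp_all
  then show ?thesis
    using vertex[of i] vertex[of j] ij(2) by (auto simp: edge_interval_def abs_le_iff)
qed

context
  fixes C :: "real set"
  assumes C: "C \<in> components (edge_union G y)"
begin

lemma component_bounded: "bounded C"
  using edge_union_dist_le[of _ 0] in_components_subset[OF C]
  by (auto simp: bounded_real intro!: exI[of _ "sqrt (\<Sum>i<n. (y i)^2)"])

lemma Sup_component: "Sup C \<in> C" and Inf_component: "Inf C \<in> C"
  using closed_components[OF closed_edge_union C] in_components_nonempty[OF C] component_bounded
  by (auto intro: closed_contains_Sup closed_contains_Inf bounded_imp_bdd_above bounded_imp_bdd_below)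

lemma le_Sup_component: "x \<in> C \<Longrightarrow> x \<le> Sup C"
  using component_bounded by (auto intro: cSup_upper bounded_imp_bdd_above)

lemma component_length_le: "Sup C - Inf C \<le> 2 * sqrt (\<Sum>i<n. (y i - c)^2)"
proof -
  have "Sup C \<in> edge_union G y" "Inf C \<in> edge_union G y"
    using Sup_component Inf_component in_components_subset[OF C] by auto
  then show ?thesis
    using edge_union_dist_le[of "Sup C" c] edge_union_dist_le[of "Inf C" c] by (simp add: abs_le_iff)
qed

lemma edge_interval_subset_component:
  assumes "{i, j} \<in> G" "i \<noteq> j" "x \<in> edge_interval y i j" "x \<in> C"
  shows "edge_interval y i j \<subseteq> C"
proof (rule components_maximal[OF C])
  show "edge_interval y i j \<subseteq> edge_union G y"
    unfolding subset_iff edge_union_iff using assms(1,2) by blast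
qed (use assms(3,4) in \<open>auto simp: edge_interval_def\<close>)

lemma component_contains_vertex: "\<exists>i<n. y i \<in> C"
proof -
  obtain x where "x \<in> C"
    using in_components_nonempty[OF C] by blast
  moreover from this have "x \<in> edge_union G y"
    using in_components_subset[OF C] by blast
  then obtain i j where "{i, j} \<in> G" "i \<noteq> j" "x \<in> edge_interval y i j"
    by (auto simp: edge_union_iff)
  ultimately show ?thesis
    using edge_interval_subset_component endpoints_in_edge_interval regular_graphs_edgeD[OF G]
    by blast
qed

text \<open>An edge with one endpoint at most Sup C and the other above it would carry C beyond
  its supremum.\<close>
lemma no_edge_across_sublevel_Sup_component: "no_edge_across G (sublevel n y (Sup C))"
  unfolding no_edge_across_def
proof
  fix e assume "e \<in> G"
  then obtain i j where ij: "i < n" "j < n" "i \<noteq> j" "e = {i, j}"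
    using regular_graphs_edgeE[OF G] by blast
  have "y i \<le> Sup C \<longleftrightarrow> y j \<le> Sup C"
  proof -
    have "False" if "{i', j'} \<in> G" "i' \<noteq> j'" "y i' \<le> Sup C" "\<not> y j' \<le> Sup C" for i' j'
    proof -
      have "Sup C \<in> edge_interval y i' j'"
        using that(3,4) by (auto simp: edge_interval_def)
      then have "y j' \<in> C"
        using edge_interval_subset_component[OF that(1,2) _ Sup_component]
          endpoints_in_edge_interval by blast
      then show False
        using le_Sup_component that(4) by blast
    qed
    then show ?thesis
      using \<open>e \<in> G\<close> ij by (metis insert_commute)
  qed
  then show "e \<subseteq> sublevel n y (Sup C) \<or> e \<inter> sublevel n y (Sup C) = {}"
    using ij unfolding sublevel_def by auto
qed

lemma sublevel_Sup_component_nonempty: "sublevel n y (Sup C) \<noteq> {}"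
  using component_contains_vertex le_Sup_component unfolding sublevel_def by blast

end

lemma sublevel_Sup_component_less:
  assumes C: "C \<in> components (edge_union G y)" and C': "C' \<in> components (edge_union G y)"
    and less: "Sup C < Sup C'"
  shows "sublevel n y (Sup C) \<noteq> sublevel n y (Sup C')"
proof -
  have "C \<noteq> C'"
    using less by (metis order_less_irrefl)
  then have "C \<inter> C' = {}"
    using components_nonoverlap[OF C C'] by blast
  then have "Sup C \<notin> C'"
    using Sup_component[OF C] by blast
  obtain j where j: "j < n" "y j \<in> C'"
    using component_contains_vertex[OF C'] by blast
  have interval: "\<forall>a\<in>C'. \<forall>b\<in>C'. \<forall>x. a \<le> x \<longrightarrow> x \<le> b \<longrightarrow> x \<in> C'"
    using in_components_connected[OF C'] unfolding connected_iff_interval .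
  have "Sup C < y j"
  proof (rule ccontr)
    assume "\<not> Sup C < y j"
    then have "Sup C \<in> C'"
      using interval[rule_format, OF j(2) Sup_component[OF C'], of "Sup C"] less by simp
    with \<open>Sup C \<notin> C'\<close> show False ..
  qed
  then have "j \<notin> sublevel n y (Sup C)" "j \<in> sublevel n y (Sup C')"
    using j le_Sup_component[OF C'] unfolding sublevel_def by auto
  then show ?thesis
    by blast
qed

lemma inj_on_sublevel_Sup_components:
  "inj_on (\<lambda>C. sublevel n y (Sup C)) (components (edge_union G y))"
proof (rule inj_onI, rule ccontr)
  fix C C' assume C: "C \<in> components (edge_union G y)" and C': "C' \<in> components (edge_union G y)"
    and eq: "sublevel n y (Sup C) = sublevel n y (Sup C')" and "C \<noteq> C'"
  then have "C \<inter> C' = {}"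
    using components_nonoverlap[OF C C'] by simp
  then have "Sup C \<noteq> Sup C'"
    using Sup_component[OF C] Sup_component[OF C'] by (metis IntI empty_iff)
  then have "Sup C < Sup C' \<or> Sup C' < Sup C"
    by linarith
  then show False
    using sublevel_Sup_component_less[OF C C'] sublevel_Sup_component_less[OF C' C] eq by metis
qed

text \<open>Each block is recovered from the sublevel set at its right end; all these sets except
  possibly the full vertex set are proper and have no edge across.\<close>
lemma card_components_edge_union_le:
  "card (components (edge_union G y)) \<le> 1 + card {S\<in>proper_sublevels n y. no_edge_across G S}"
proof -
  have "(\<lambda>C. sublevel n y (Sup C)) ` components (edge_union G y)
          \<subseteq> insert {..<n} {S\<in>proper_sublevels n y. no_edge_across G S}"
    using no_edge_across_sublevel_Sup_component sublevel_Sup_component_nonempty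
    unfolding proper_sublevels_def by auto
  then have "card (components (edge_union G y))
      \<le> card (insert {..<n} {S\<in>proper_sublevels n y. no_edge_across G S})"
    by (intro card_inj_on_le[OF inj_on_sublevel_Sup_components]) (auto simp: finite_proper_sublevels)
  also have "\<dots> \<le> 1 + card {S\<in>proper_sublevels n y. no_edge_across G S}"
    by (simp add: card_insert_le_m1)
  finally show ?thesis .
qed

end

section \<open>Expected block sum of one step\<close>

lemma powr_le_two_mult_powr_half:
  fixes L W s :: real
  assumes "0 \<le> L" "L \<le> 2 * sqrt W" "0 \<le> W" "0 < s" "s \<le> 1"
  shows "L powr s \<le> 2 * W powr (s / 2)"
proof -
  have "L powr s \<le> (2 * sqrt W) powr s"
    using assms by (intro powr_mono2) auto
  also have "\<dots> = 2 powr s * W powr (s / 2)"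
    using assms(3) by (simp add: powr_mult powr_half_sqrt[symmetric] powr_powr)
  also have "\<dots> \<le> 2 * W powr (s / 2)"
    using powr_mono[of s 1 2] assms(5) by (intro mult_right_mono) auto
  finally show ?thesis .
qed

lemma block_sum_le:
  assumes G: "G \<in> regular_graphs n k" and s: "0 < s" "s \<le> 1"
  shows "block_sum s G y
           \<le> real (1 + card {S\<in>proper_sublevels n y. no_edge_across G S})
               * (2 * (\<Sum>i<n. (y i - c)^2) powr (s / 2))"
proof -
  have "block_sum s G y \<le> (\<Sum>C\<in>components (edge_union G y). 2 * (\<Sum>i<n. (y i - c)^2) powr (s / 2))"
    unfolding block_sum_def
  proof (rule sum_mono)
    fix C assume C: "C \<in> components (edge_union G y)"
    show "(Sup C - Inf C) powr s \<le> 2 * (\<Sum>i<n. (y i - c)^2) powr (s / 2)"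
      using le_Sup_component[OF G C Inf_component[OF G C]] component_length_le[OF G C] s
      by (intro powr_le_two_mult_powr_half) (auto intro: sum_nonneg)
  qed
  also have "\<dots> \<le> real (1 + card {S\<in>proper_sublevels n y. no_edge_across G S})
                   * (2 * (\<Sum>i<n. (y i - c)^2) powr (s / 2))"
    using card_components_edge_union_le[OF G, of y] by (simp add: mult_right_mono)
  finally show ?thesis .
qed

lemma sum_card_no_edge_across_le:
  assumes k: "2 \<le> k" and n: "1 < n"
  shows "(\<Sum>G\<in>regular_graphs n k. card {S\<in>proper_sublevels n y. no_edge_across G S})
           \<le> card (regular_graphs n k)"
proof -
  let ?R = "regular_graphs n k" and ?P = "proper_sublevels n y"
  have "(\<Sum>G\<in>?R. card {S\<in>?P. no_edge_across G S})
      = (\<Sum>G\<in>?R. \<Sum>S\<in>?P. if no_edge_across G S then 1 else 0)"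
    by (simp add: sum.If_cases finite_proper_sublevels Int_def conj_commute)
  also have "\<dots> = (\<Sum>S\<in>?P. \<Sum>G\<in>?R. if no_edge_across G S then 1 else 0)"
    by (rule sum.swap)
  also have "\<dots> = (\<Sum>S\<in>?P. card {G\<in>?R. no_edge_across G S})"
    by (simp add: sum.If_cases finite_regular_graphs Int_def conj_commute)
  finally have swap: "(\<Sum>G\<in>?R. card {S\<in>?P. no_edge_across G S})
      = (\<Sum>S\<in>?P. card {G\<in>?R. no_edge_across G S})" .
  have "(\<Sum>S\<in>?P. card {G\<in>?R. no_edge_across G S}) * (n - 1) \<le> card ?R * (n - 1)"
  proof -
    have "(\<Sum>S\<in>?P. card {G\<in>?R. no_edge_across G S}) * (n - 1)
        = (\<Sum>S\<in>?P. card {G\<in>?R. no_edge_across G S} * (n - 1))"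
      by (simp add: sum_distrib_right)
    also have "\<dots> \<le> (\<Sum>S\<in>?P. card ?R)"
    proof (rule sum_mono)
      fix S assume S: "S \<in> ?P"
      then have "S \<subseteq> {..<n}" "S \<noteq> {}" "S \<noteq> {..<n}"
        using proper_sublevels_subset[OF S] unfolding proper_sublevels_def by auto
      then show "card {G\<in>?R. no_edge_across G S} * (n - 1) \<le> card ?R"
        using k by (rule card_no_edge_across_le)
    qed
    also have "\<dots> \<le> (n - 1) * card ?R"
      using card_proper_sublevels by (simp add: mult_right_mono)
    finally show ?thesis
      by (simp add: mult.commute)
  qed
  then show ?thesis
    unfolding swap using n by simp
qed

lemma sum_block_sum_le:
  assumes "2 \<le> k" "1 < n" "0 < s" "s \<le> 1"
  shows "(\<Sum>G\<in>regular_graphs n k. block_sum s G y)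
           \<le> 4 * real (card (regular_graphs n k)) * (\<Sum>i<n. (y i - c)^2) powr (s / 2)"
proof -
  let ?R = "regular_graphs n k" and ?B = "2 * (\<Sum>i<n. (y i - c)^2) powr (s / 2)"
  have "(\<Sum>G\<in>?R. block_sum s G y)
      \<le> (\<Sum>G\<in>?R. real (1 + card {S\<in>proper_sublevels n y. no_edge_across G S}) * ?B)"
    using assms by (intro sum_mono block_sum_le) auto
  also have "\<dots> = real (card ?R + (\<Sum>G\<in>?R. card {S\<in>proper_sublevels n y. no_edge_across G S})) * ?B"
    by (simp add: sum_distrib_right[symmetric] sum.distrib)
  also have "\<dots> \<le> real (2 * card ?R) * ?B"
  proof (rule mult_right_mono)
    show "real (card ?R + (\<Sum>G\<in>?R. card {S\<in>proper_sublevels n y. no_edge_across G S}))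
        \<le> real (2 * card ?R)"
      unfolding of_nat_le_iff using sum_card_no_edge_across_le[OF assms(1,2), of y] by simp
  qed simp
  finally show ?thesis
    by simp
qed

section \<open>The random averaging system\<close>

lemma powr_le_affine:
  fixes u r :: real
  assumes "0 \<le> u" "0 < r" "r \<le> 1"
  shows "u powr r \<le> r * u + (1 - r)"
proof (cases "u = 0")
  case False
  then have "u powr r * 1 powr (1 - r) \<le> r * u + (1 - r) * 1"
    using assms by (intro Youngs_inequality_0) auto
  then show ?thesis
    by simp
qed (use assms in simp)

lemma sum_powr_le_card_mult_mean_powr:
  fixes f :: "'a \<Rightarrow> real"
  assumes A: "finite A" "A \<noteq> {}" and f: "\<And>a. a \<in> A \<Longrightarrow> 0 \<le> f a" and r: "0 < r" "r \<le> 1"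
  shows "(\<Sum>a\<in>A. f a powr r) \<le> real (card A) * ((\<Sum>a\<in>A. f a) / real (card A)) powr r"
proof -
  define m where "m = (\<Sum>a\<in>A. f a) / real (card A)"
  have card: "real (card A) > 0"
    using A by (simp add: card_gt_0_iff)
  consider "m = 0" | "m > 0"
    using f card unfolding m_def by (metis divide_nonneg_pos linorder_neqE_linordered_idom not_le sum_nonneg)
  then show ?thesis
  proof cases
    case 1
    then have "\<forall>a\<in>A. f a = 0"
      using card f A(1) by (auto simp: m_def sum_nonneg_eq_0_iff)
    then show ?thesis
      by simp
  next
    case 2
    have "(\<Sum>a\<in>A. f a powr r) = (\<Sum>a\<in>A. (f a / m) powr r) * m powr r"
      using 2 by (simp add: sum_distrib_right powr_divide)
    also have "\<dots> \<le> (\<Sum>a\<in>A. r * (f a / m) + (1 - r)) * m powr r"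
      using f r 2 by (intro mult_right_mono sum_mono powr_le_affine) auto
    also have "(\<Sum>a\<in>A. r * (f a / m) + (1 - r)) = r * ((\<Sum>a\<in>A. f a) / m) + (1 - r) * real (card A)"
      by (simp add: sum.distrib sum_distrib_left sum_divide_distrib)
    also have "(\<Sum>a\<in>A. f a) / m = real (card A)"
      using 2 card unfolding m_def by (auto simp: field_simps)
    finally have "(\<Sum>a\<in>A. f a powr r) \<le> (r * real (card A) + (1 - r) * real (card A)) * m powr r" .
    then show ?thesis
      by (simp add: m_def algebra_simps)
  qed
qed

lemma traj_SCons: "traj d n x (G ## \<omega>) (Suc t) = traj d n (avg_step d n G x) \<omega> t"
  by (induction t) simp_all

locale random_averaging =
  fixes d n :: nat and s :: real
  assumes d: "d > 3" and n: "n > d" and regular_graphs_nonempty: "regular_graphs n (d - 1) \<noteq> {}"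
    and s: "0 < s" "s \<le> 1"
begin

abbreviation "R \<equiv> regular_graphs n (d - 1)"
abbreviation "M \<equiv> measure_pmf (pmf_of_set R)"
abbreviation "dispersion c x \<equiv> \<Sum>i<n. (x i - c)^2"

definition rho :: real where
  "rho = 1 - 2 * (real d - 1) / (real d)^2"

lemma rho_bounds: "0 < rho" "rho < 1"
proof -
  have "0 < (real d - 1)^2 + 1"
    by (simp add: add_nonneg_pos)
  then have "2 * (real d - 1) < (real d)^2"
    by (simp add: power2_eq_square algebra_simps)
  then show "0 < rho" "rho < 1"
    using d by (simp_all add: rho_def field_simps)
qed

lemma rho_powr_le: "rho powr (s / 2) \<le> 1 - s * (real d - 1) / (real d)^2"
proof -
  have "s / 2 * rho + (1 - s / 2) = 1 - s * (real d - 1) / (real d)^2"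
    using d by (simp add: rho_def field_simps)
  then show ?thesis
    using powr_le_affine[of rho "s / 2"] rho_bounds s by simp
qed

lemma card_regular_graphs_pos: "real (card R) > 0"
  using regular_graphs_nonempty finite_regular_graphs by (simp add: card_gt_0_iff)

lemma nn_integral_uniform_graph:
  assumes "\<And>G. G \<in> R \<Longrightarrow> 0 \<le> f G"
  shows "(\<integral>\<^sup>+G. ennreal (f G) \<partial>M) = ennreal ((\<Sum>G\<in>R. f G) / real (card R))"
proof -
  have "(\<integral>\<^sup>+G. ennreal (f G) \<partial>M) = (\<Sum>G\<in>R. ennreal (f G)) / of_nat (card R)"
    by (rule nn_integral_pmf_of_set[OF regular_graphs_nonempty finite_regular_graphs])
  also have "\<dots> = ennreal (\<Sum>G\<in>R. f G) / ennreal (real (card R))"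
    using assms by (simp add: sum_ennreal ennreal_of_nat_eq_real_of_nat)
  finally show ?thesis
    using assms card_regular_graphs_pos by (simp add: divide_ennreal sum_nonneg)
qed

lemma sum_powr_dispersion_avg_step_le:
  assumes c: "c = (\<Sum>i<n. x i) / real n" and r: "0 < r" "r \<le> 1"
  shows "(\<Sum>G\<in>R. dispersion c (avg_step d n G x) powr r)
           \<le> real (card R) * rho powr r * dispersion c x powr r"
proof -
  have "(\<Sum>G\<in>R. dispersion c (avg_step d n G x) powr r)
      \<le> real (card R) * ((\<Sum>G\<in>R. dispersion c (avg_step d n G x)) / real (card R)) powr r"
    using regular_graphs_nonempty r
    by (intro sum_powr_le_card_mult_mean_powr finite_regular_graphs) (auto intro: sum_nonneg)
  also have "\<dots> \<le> real (card R) * (rho * dispersion c x) powr r"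
  proof (intro mult_left_mono powr_mono2)
    have "(\<Sum>G\<in>R. dispersion c (avg_step d n G x)) \<le> rho * real (card R) * dispersion c x"
      unfolding rho_def using d n c by (intro sum_regular_graphs_sum_square_dev_avg_step_le) auto
    then show "(\<Sum>G\<in>R. dispersion c (avg_step d n G x)) / real (card R) \<le> rho * dispersion c x"
      using card_regular_graphs_pos by (simp add: divide_le_eq mult.commute mult.left_commute)
  qed (use r card_regular_graphs_pos in \<open>auto intro!: divide_nonneg_pos sum_nonneg\<close>)
  also have "\<dots> = real (card R) * rho powr r * dispersion c x powr r"
    using rho_bounds by (simp add: powr_mult)
  finally show ?thesis .
qed

text \<open>Off the null set of sequences leaving R, replacing each graph by a fixed element of R
  changes nothing; afterwards each step of the recursion is a finite case distinction, which
  makes measurability and the integral recursion straightforward.\<close>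
definition to_regular :: "nat set set \<Rightarrow> nat set set" where
  "to_regular G = (if G \<in> R then G else (SOME G. G \<in> R))"

lemma to_regular_in: "to_regular G \<in> R"
  unfolding to_regular_def using regular_graphs_nonempty by (auto intro: someI_ex)

lemma to_regular_id: "G \<in> R \<Longrightarrow> to_regular G = G"
  unfolding to_regular_def by simp

definition energy_term :: "nat \<Rightarrow> (nat \<Rightarrow> real) \<Rightarrow> nat set set stream \<Rightarrow> ennreal" where
  "energy_term t x \<omega> = ennreal (block_sum s (to_regular (\<omega> !! t)) (traj d n x (smap to_regular \<omega>) t))"

lemma energy_term_0: "energy_term 0 x \<omega> = ennreal (block_sum s (to_regular (shd \<omega>)) x)"
  unfolding energy_term_def by simp

lemma energy_term_Suc: "energy_term (Suc t) x (G ## \<omega>) = energy_term t (avg_step d n (to_regular G) x) \<omega>"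
  unfolding energy_term_def by (simp del: traj.simps add: traj_SCons)

lemma measurable_energy_term: "energy_term t x \<in> borel_measurable (stream_space M)"
proof (induction t arbitrary: x)
  case 0
  show ?case
    unfolding energy_term_0 by (rule measurable_compose[OF measurable_shd]) simp
next
  case (Suc t)
  have "energy_term (Suc t) x
      = (\<lambda>\<omega>. \<Sum>G\<in>R. if to_regular (shd \<omega>) = G then energy_term t (avg_step d n G x) (stl \<omega>) else 0)"
  proof
    fix \<omega> :: "nat set set stream"
    have "energy_term (Suc t) x \<omega> = energy_term t (avg_step d n (to_regular (shd \<omega>)) x) (stl \<omega>)"
      using energy_term_Suc[of t x "shd \<omega>" "stl \<omega>"] by simp
    then show "energy_term (Suc t) x \<omega>
        = (\<Sum>G\<in>R. if to_regular (shd \<omega>) = G then energy_term t (avg_step d n G x) (stl \<omega>) else 0)"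
      using to_regular_in[of "shd \<omega>"] finite_regular_graphs by (simp add: sum.delta)
  qed
  moreover have "{\<omega> \<in> space (stream_space M). to_regular (shd \<omega>) = G} \<in> sets (stream_space M)" for G
  proof -
    have "{\<omega> \<in> space (stream_space M). to_regular (shd \<omega>) = G}
        = shd -` {G'. to_regular G' = G} \<inter> space (stream_space M)"
      by blast
    also have "\<dots> \<in> sets (stream_space M)"
      by (rule measurable_sets[OF measurable_shd]) simp
    finally show ?thesis .
  qed
  ultimately show ?case
    using measurable_compose[OF measurable_stl Suc.IH]
    by (auto intro!: borel_measurable_sum measurable_If)
qed

lemma nn_integral_energy_term_0:
  "(\<integral>\<^sup>+\<omega>. energy_term 0 x \<omega> \<partial>stream_space M) = (\<integral>\<^sup>+G. ennreal (block_sum s (to_regular G) x) \<partial>M)"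
proof -
  interpret S: prob_space "stream_space M"
    by (rule prob_space.prob_space_stream_space[OF prob_space_measure_pmf])
  show ?thesis
    by (subst prob_space.nn_integral_stream_space[OF prob_space_measure_pmf measurable_energy_term])
      (simp add: energy_term_0 S.emeasure_space_1[simplified])
qed

lemma nn_integral_energy_term_Suc:
  "(\<integral>\<^sup>+\<omega>. energy_term (Suc t) x \<omega> \<partial>stream_space M)
     = (\<integral>\<^sup>+G. (\<integral>\<^sup>+\<omega>. energy_term t (avg_step d n (to_regular G) x) \<omega> \<partial>stream_space M) \<partial>M)"
  by (subst prob_space.nn_integral_stream_space[OF prob_space_measure_pmf measurable_energy_term])
    (simp add: energy_term_Suc)

lemma nn_integral_energy_term_le:
  assumes "c = (\<Sum>i<n. x i) / real n"
  shows "(\<integral>\<^sup>+\<omega>. energy_term t x \<omega> \<partial>stream_space M)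
           \<le> ennreal (4 * (rho powr (s / 2))^t * dispersion c x powr (s / 2))"
  using assms
proof (induction t arbitrary: x)
  case 0
  have "(\<integral>\<^sup>+\<omega>. energy_term 0 x \<omega> \<partial>stream_space M) = ennreal ((\<Sum>G\<in>R. block_sum s G x) / real (card R))"
    unfolding nn_integral_energy_term_0
    by (subst nn_integral_uniform_graph) (simp_all add: block_sum_def sum_nonneg to_regular_id)
  also have "\<dots> \<le> ennreal (4 * (rho powr (s / 2))^0 * dispersion c x powr (s / 2))"
    using sum_block_sum_le[of "d - 1" n s x c] d n s card_regular_graphs_pos
    by (intro ennreal_leI) (simp add: divide_le_eq algebra_simps)
  finally show ?case .
next
  case (Suc t)
  let ?a = "rho powr (s / 2)"
  have mean: "c = (\<Sum>i<n. avg_step d n G x i) / real n" if "G \<in> R" for G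
    using Suc.prems sum_avg_step[OF that] d by simp
  have "(\<integral>\<^sup>+\<omega>. energy_term (Suc t) x \<omega> \<partial>stream_space M)
      \<le> (\<integral>\<^sup>+G. ennreal (4 * ?a^t * dispersion c (avg_step d n (to_regular G) x) powr (s / 2)) \<partial>M)"
    unfolding nn_integral_energy_term_Suc
    by (intro nn_integral_mono Suc.IH mean to_regular_in)
  also have "\<dots> = ennreal (4 * ?a^t * (\<Sum>G\<in>R. dispersion c (avg_step d n G x) powr (s / 2)) / real (card R))"
    by (subst nn_integral_uniform_graph) (simp_all add: to_regular_id sum_distrib_left)
  also have "\<dots> \<le> ennreal (4 * ?a^Suc t * dispersion c x powr (s / 2))"
  proof (rule ennreal_leI)
    have "4 * ?a^t * (\<Sum>G\<in>R. dispersion c (avg_step d n G x) powr (s / 2))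
        \<le> 4 * ?a^t * (real (card R) * ?a * dispersion c x powr (s / 2))"
      using sum_powr_dispersion_avg_step_le[OF Suc.prems, of "s / 2"] s by (intro mult_left_mono) auto
    then show "4 * ?a^t * (\<Sum>G\<in>R. dispersion c (avg_step d n G x) powr (s / 2)) / real (card R)
        \<le> 4 * ?a^Suc t * dispersion c x powr (s / 2)"
      using card_regular_graphs_pos by (simp add: divide_le_eq algebra_simps)
  qed
  finally show ?case .
qed

lemma AE_regular_graphs: "AE \<omega> in stream_space M. \<forall>t. \<omega> !! t \<in> R"
proof -
  have "AE \<omega> in stream_space M. stream_all (\<lambda>G. G \<in> R) \<omega>"
  proof (rule prob_space.AE_stream_all[OF prob_space_measure_pmf])
    show "AE G in M. G \<in> R"
      unfolding AE_measure_pmf_iff set_pmf_of_set[OF regular_graphs_nonempty finite_regular_graphs]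
      by (rule ballI)
  qed simp
  then show ?thesis
    unfolding stream_all_def .
qed

lemma s_energy_eq_suminf_energy_term:
  assumes "\<forall>t. \<omega> !! t \<in> R"
  shows "s_energy d n s x0 \<omega> = (\<Sum>t. energy_term t x0 \<omega>)"
proof -
  have "smap to_regular \<omega> = \<omega>"
    using assms to_regular_id by (simp add: smap_alt)
  then show ?thesis
    using assms to_regular_id by (simp add: s_energy_def energy_term_def)
qed

lemma expected_s_energy_le:
  assumes c: "c = (\<Sum>i<n. x0 i) / real n"
  shows "(\<integral>\<^sup>+\<omega>. s_energy d n s x0 \<omega> \<partial>stream_space M)
           \<le> ennreal (4 * dispersion c x0 powr (s / 2) / (1 - rho powr (s / 2)))"
proof -
  let ?a = "rho powr (s / 2)"
  have "0 < s * (real d - 1) / (real d)^2"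
    using s d by simp
  then have a: "0 \<le> ?a" "?a < 1"
    using rho_powr_le by auto
  have "(\<integral>\<^sup>+\<omega>. s_energy d n s x0 \<omega> \<partial>stream_space M) = (\<integral>\<^sup>+\<omega>. (\<Sum>t. energy_term t x0 \<omega>) \<partial>stream_space M)"
    by (rule nn_integral_cong_AE)
      (use AE_regular_graphs in \<open>auto elim!: eventually_mono simp: s_energy_eq_suminf_energy_term\<close>)
  also have "\<dots> = (\<Sum>t. \<integral>\<^sup>+\<omega>. energy_term t x0 \<omega> \<partial>stream_space M)"
    by (rule nn_integral_suminf) (rule measurable_energy_term)
  also have "\<dots> \<le> (\<Sum>t. ennreal (4 * ?a^t * dispersion c x0 powr (s / 2)))"
    by (intro suminf_le summableI nn_integral_energy_term_le[OF c])
  also have "\<dots> = ennreal (4 * dispersion c x0 powr (s / 2) / (1 - ?a))"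
  proof (rule suminf_ennreal_eq)
    have "(\<lambda>t. 4 * ?a^t * dispersion c x0 powr (s / 2)) sums (4 * (1 / (1 - ?a)) * dispersion c x0 powr (s / 2))"
      using a by (intro sums_mult2 sums_mult geometric_sums) simp
    then show "(\<lambda>t. 4 * ?a^t * dispersion c x0 powr (s / 2)) sums (4 * dispersion c x0 powr (s / 2) / (1 - ?a))"
      by simp
  qed simp
  finally show ?thesis .
qed

lemma energy_bound_le:
  assumes "dispersion c x0 \<le> 1"
  shows "4 * dispersion c x0 powr (s / 2) / (1 - rho powr (s / 2)) \<le> 4 * (real d)^2 / (real d - 1) / s"
proof -
  have gap: "s * (real d - 1) / (real d)^2 \<le> 1 - rho powr (s / 2)"
    using rho_powr_le by simp
  have pos: "0 < s * (real d - 1) / (real d)^2"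
    using s d by simp
  have "4 * dispersion c x0 powr (s / 2) / (1 - rho powr (s / 2)) \<le> 4 / (1 - rho powr (s / 2))"
  proof (rule divide_right_mono)
    show "4 * dispersion c x0 powr (s / 2) \<le> 4"
      using assms s powr_le1[of "s / 2" "dispersion c x0"] by (simp add: sum_nonneg)
  qed (use gap pos in simp)
  also have "\<dots> \<le> 4 / (s * (real d - 1) / (real d)^2)"
    using gap pos by (intro divide_left_mono mult_pos_pos) auto
  also have "\<dots> = 4 * (real d)^2 / (real d - 1) / s"
    using s d by (simp add: field_simps)
  finally show ?thesis .
qed

end

theorem theorem1:
  fixes d :: nat
  assumes "d > 3"
  shows "\<exists>c>0. \<forall>n s (x0 :: nat \<Rightarrow> real).
           n > d \<longrightarrow> regular_graphs n (d - 1) \<noteq> {} \<longrightarrow> 0 < s \<longrightarrow> s \<le> 1 \<longrightarrow>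
           (\<Sum>i<n. real d * (x0 i - (\<Sum>j<n. x0 j) / real n)^2) \<le> 1 \<longrightarrow>
           (\<integral>\<^sup>+ \<omega>. s_energy d n s x0 \<omega> \<partial>graph_seq_measure d n) \<le> ennreal (c / s)"
proof (intro exI[of _ "4 * (real d)^2 / (real d - 1)"] conjI allI impI)
  show "0 < 4 * (real d)^2 / (real d - 1)"
    using assms by simp
  fix n :: nat and s :: real and x0 :: "nat \<Rightarrow> real"
  assume "n > d" "regular_graphs n (d - 1) \<noteq> {}" "0 < s" "s \<le> 1"
    and init: "(\<Sum>i<n. real d * (x0 i - (\<Sum>j<n. x0 j) / real n)^2) \<le> 1"
  then interpret random_averaging d n s
    using assms by unfold_locales
  define c where "c = (\<Sum>j<n. x0 j) / real n"
  have "0 \<le> (\<Sum>i<n. (x0 i - c)^2)"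
    by (intro sum_nonneg) auto
  then have "(\<Sum>i<n. (x0 i - c)^2) \<le> real d * (\<Sum>i<n. (x0 i - c)^2)"
    using assms by (intro mult_le_cancel_right1[THEN iffD2]) auto
  also have "\<dots> \<le> 1"
    using init by (simp add: c_def sum_distrib_left)
  finally have "(\<Sum>i<n. (x0 i - c)^2) \<le> 1" .
  have "(\<integral>\<^sup>+ \<omega>. s_energy d n s x0 \<omega> \<partial>graph_seq_measure d n)
      \<le> ennreal (4 * (\<Sum>i<n. (x0 i - c)^2) powr (s / 2) / (1 - rho powr (s / 2)))"
    unfolding graph_seq_measure_def by (rule expected_s_energy_le[OF c_def])
  also have "\<dots> \<le> ennreal (4 * (real d)^2 / (real d - 1) / s)"
    by (intro ennreal_leI energy_bound_le) fact
  finally show "(\<integral>\<^sup>+ \<omega>. s_energy d n s x0 \<omega> \<partial>graph_seq_measure d n)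
      \<le> ennreal (4 * (real d)^2 / (real d - 1) / s)" .
qed

end
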